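(* For any fixed $0\le\lambda_1\le\lambda_2\le1$, the quantity $\Gamma_n\big((\theta^*_n)_{\lambda_1,\lambda_2}\big)$ is non-increasing in $n\ge2$.
   Context: A threshold function is a non-increasing map $\theta:[0,1]\to[0,1]$. For $0\le\lambda_1\le\lambda_2\le1$, $\theta_{\lambda_1,\lambda_2}(t)=1$ for $t\in[0,\lambda_1]$, $=\theta(t)$ for $t\in(\lambda_1,\lambda_2)$, $=0$ for $t\in[\lambda_2,1]$. $\Gamma_n(\theta)=\int_0^1\Big(\int_s^1\frac{(1-t+t\theta(s))^n-t\theta(s)^n}{t(1-t)}\,\mathrm dt-\theta(s)^n\Big)\mathrm ds$. For $s\in[0,1)$, $\theta^*_n(s)$ is the unique solution in $(0,1)$ of $\int_s^1\frac{(1-t+t\theta^*_n(s))^{n-1}-\theta^*_n(s)^{n-1}}{1-t}\,\mathrm dt=\theta^*_n(s)^{n-1}$, and $\theta^*_n(1)=0$. *)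

theory Defs
  imports "HOL-Analysis.Analysis"
begin

definition trunc_thr :: "(real \<Rightarrow> real) \<Rightarrow> real \<Rightarrow> real \<Rightarrow> real \<Rightarrow> real" where
  "trunc_thr \<theta> l1 l2 t = (if t \<le> l1 then 1 else if t < l2 then \<theta> t else 0)"

definition Gamma :: "nat \<Rightarrow> (real \<Rightarrow> real) \<Rightarrow> real" where
  "Gamma n \<theta> = integral {0..1} (\<lambda>s.
      integral {s..1} (\<lambda>t. ((1 - t + t * \<theta> s) ^ n - t * (\<theta> s) ^ n) / (t * (1 - t)))
      - (\<theta> s) ^ n)"

definition theta_star :: "nat \<Rightarrow> real \<Rightarrow> real" where
  "theta_star n s = (if s < 1 then
      (THE x. x \<in> {0<..<1} \<and>
         integral {s..1} (\<lambda>t. ((1 - t + t * x) ^ (n - 1) - x ^ (n - 1)) / (1 - t)) = x ^ (n - 1))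
    else 0)"

end

(* Write Gamma_n(theta) as the integral over s in [0,1] of g_n(s, theta s), where
   g_n(s, x) = integral_s^1 K_n(x, t) dt - x^n (gamma_inner), and let F_j(s, x) (theta_residual)
   be the residual of the equation whose root in (0,1) is theta*_(j+1)(s).  Two identities carry
   the proof:
     d/dx g_n(s, x) = n F_(n-1)(s, x)   and   g_n(s, x) - g_(n+1)(s, x) = (1 - x) F_n(s, x).
   Since F_j(s, x) / x^j is strictly decreasing in x, F_(n-1)(s, -) changes sign exactly at
   theta*_n(s), so theta*_n(s) maximises g_n(s, -) on [0,1].  Hence
     g_(n+1)(s, theta*_(n+1)(s)) = g_n(s, theta*_(n+1)(s)) <= g_n(s, theta*_n(s)),
   while on the truncated parts x = 1 gives equality and x = 0 gives
   F_n(s, 0) = (1 - s)^n / n >= 0.  The comparison is pointwise in s, so it needs no assumption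
   on l1, l2.  The integrands are piecewise monotone in s and O(- ln s) near 0, hence
   integrable, and integrating the pointwise inequality proves the theorem. *)

theory Submission
  imports Defs
begin

lemma integral_le_Ioo:
  fixes f g :: "real \<Rightarrow> real"
  assumes "f integrable_on {a..b}" "g integrable_on {a..b}" "\<And>x. a < x \<Longrightarrow> x < b \<Longrightarrow> f x \<le> g x"
  shows "integral {a..b} f \<le> integral {a..b} g"
  using assms unfolding integral_open_interval_real integrable_on_Icc_iff_Ioo
  by (intro integral_le) auto

lemma diff_le_power_diff:
  fixes u v :: real
  assumes "1 \<le> v" "v \<le> u" "1 \<le> j"
  shows "u - v \<le> u ^ j - v ^ j"
proof -
  obtain k where j: "j = Suc k"
    using assms by (cases j) auto
  have "1 \<le> u ^ k" "v ^ k \<le> u ^ k"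
    using assms by (auto intro: one_le_power power_mono)
  then have "u - v \<le> (u - v) * u ^ k" "0 \<le> v * (u ^ k - v ^ k)"
    using assms mult_left_mono[of 1 "u ^ k" "u - v"] by auto
  moreover have "u ^ Suc k - v ^ Suc k = (u - v) * u ^ k + v * (u ^ k - v ^ k)"
    by (simp add: algebra_simps)
  ultimately show ?thesis
    unfolding j by linarith
qed

lemma integrable_on_Icc_antimono_on_Ioo:
  fixes f g :: "real \<Rightarrow> real"
  assumes "antimono_on {c..d} f" "\<And>x. c < x \<Longrightarrow> x < d \<Longrightarrow> g x = f x"
  shows "g integrable_on {c..d}"
proof -
  have "mono_on {c..d} (\<lambda>x. - f x)"
    using assms(1) by (auto simp: monotone_on_def)
  then have "f integrable_on {c..d}"
    using integrable_neg[OF integrable_on_mono_on] by fastforce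
  then show ?thesis
    unfolding integrable_on_Icc_iff_Ioo
    using Henstock_Kurzweil_Integration.integrable_cong[of "{c<..<d}" g f] assms(2) by simp
qed

lemma integrable_on_Icc_if_nonneg_bounded_on_seq:
  fixes f :: "real \<Rightarrow> real" and a :: "nat \<Rightarrow> real"
  assumes a_bounds: "\<And>j. c < a j" "\<And>j. a j \<le> d" and a_dec: "\<And>j. a (Suc j) \<le> a j"
    and a_lim: "a \<longlonglongrightarrow> c"
    and integrable: "\<And>j. f integrable_on {a j..d}"
    and nonneg: "\<And>x. c < x \<Longrightarrow> x \<le> d \<Longrightarrow> 0 \<le> f x"
    and bounded: "\<And>j. integral {a j..d} f \<le> B"
  shows "f integrable_on {c..d}"
proof -
  define f_cut where "f_cut j x = (if x \<in> {a j..d} then f x else 0)" for j x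
  have cut_integrable: "f_cut j integrable_on {c..d}" for j
    unfolding f_cut_def integrable_restrict_Int using a_bounds[of j] integrable
    by (simp add: Int_absorb2)
  have cut_integral: "integral {c..d} (f_cut j) = integral {a j..d} f" for j
    unfolding f_cut_def integral_restrict_Int using a_bounds[of j] by (simp add: Int_absorb2)
  have cut_mono: "f_cut j x \<le> f_cut (Suc j) x" if "x \<in> {c..d}" for j x
    using that a_dec[of j] a_bounds[of "Suc j"] nonneg[of x] by (auto simp: f_cut_def)
  have cut_lim: "(\<lambda>j. f_cut j x) \<longlonglongrightarrow> (if x = c then 0 else f x)" if "x \<in> {c..d}" for x
  proof (cases "x = c")
    case True
    then have "f_cut j x = 0" for j
      using a_bounds[of j] by (simp add: f_cut_def)
    then show ?thesis
      using True by simp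
  next
    case False
    have "\<forall>\<^sub>F j in sequentially. a j < x"
      using a_lim by (rule order_tendstoD(2)) (use that False in auto)
    then have "\<forall>\<^sub>F j in sequentially. f_cut j x = f x"
      by eventually_elim (use that in \<open>simp add: f_cut_def\<close>)
    then show ?thesis
      using False by (simp add: tendsto_eventually)
  qed
  have "0 \<le> integral {c..d} (f_cut j) \<and> integral {c..d} (f_cut j) \<le> B" for j
    unfolding cut_integral using a_bounds[of j]
    by (auto intro!: integral_nonneg integrable nonneg bounded)
  then have "bounded (range (\<lambda>j. integral {c..d} (f_cut j)))"
    unfolding bounded_iff by (intro exI[of _ B]) auto
  then have "(\<lambda>x. if x = c then 0 else f x) integrable_on {c..d}"
    using monotone_convergence_increasing[OF cut_integrable cut_mono cut_lim] by blast
  then show ?thesis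
    by (rule integrable_spike_finite[of "{c}", rotated 2]) auto
qed

lemma integrable_on_Icc_if_nonneg_bounded_tails:
  fixes f :: "real \<Rightarrow> real"
  assumes integrable: "\<And>a. c < a \<Longrightarrow> a \<le> d \<Longrightarrow> f integrable_on {a..d}"
    and nonneg: "\<And>x. c < x \<Longrightarrow> x \<le> d \<Longrightarrow> 0 \<le> f x"
    and bounded: "\<And>a. c < a \<Longrightarrow> a \<le> d \<Longrightarrow> integral {a..d} f \<le> B"
  shows "f integrable_on {c..d}"
proof (cases "c < d")
  case False
  then show ?thesis
    using integrable_on_null[of c d f] by simp
next
  case True
  define a where "a j = c + (d - c) / real (Suc j)" for j
  have a_bounds: "c < a j" "a j \<le> d" for j
    using True by (auto simp: a_def field_simps intro!: mult_right_mono)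
  moreover have "a (Suc j) \<le> a j" for j
    using True by (auto simp: a_def intro!: divide_left_mono)
  moreover have "a \<longlonglongrightarrow> c"
    unfolding a_def
    using tendsto_add[OF tendsto_const LIMSEQ_Suc[OF lim_const_over_n[of "d - c"]], of c] by simp
  ultimately show ?thesis
    using integrable nonneg bounded
    by (intro integrable_on_Icc_if_nonneg_bounded_on_seq[of c a d _ B]) auto
qed

lemma has_integral_inverse_Icc:
  fixes a b :: real
  assumes "0 < a" "a \<le> b"
  shows "((\<lambda>t. 1 / t) has_integral (ln b - ln a)) {a..b}"
proof -
  have "(ln has_real_derivative 1 / t) (at t within {a..b})" if "t \<in> {a..b}" for t :: real
    using assms that by (auto intro!: derivative_eq_intros)
  then show ?thesis
    using assms by (intro fundamental_theorem_of_calculus)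
      (auto simp: has_real_derivative_iff_has_vector_derivative [symmetric])
qed

lemma has_integral_neg_ln:
  fixes a b :: real
  assumes "0 < a" "a \<le> b"
  shows "((\<lambda>s. - ln s) has_integral (b - b * ln b) - (a - a * ln a)) {a..b}"
proof -
  have "((\<lambda>s. s - s * ln s) has_real_derivative - ln s) (at s within {a..b})" if "s \<in> {a..b}" for s
    using assms that by (auto intro!: derivative_eq_intros)
  then show ?thesis
    using assms by (intro fundamental_theorem_of_calculus)
      (auto simp: has_real_derivative_iff_has_vector_derivative [symmetric])
qed

text \<open>With \<open>a = 1 - t + t x\<close>, this is \<open>(a^n - x^n) / (a - x)\<close> written as a polynomial, so that
  it stays meaningful at \<open>t = 1\<close> and \<open>x = 1\<close>.\<close>
definition power_diff_quot :: "nat \<Rightarrow> real \<Rightarrow> real \<Rightarrow> real" where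
  "power_diff_quot n x t = (\<Sum>i<n. x ^ (n - Suc i) * (1 - t + t * x) ^ i)"

definition gamma_kernel :: "nat \<Rightarrow> real \<Rightarrow> real \<Rightarrow> real" where
  "gamma_kernel n x t = ((1 - t + t * x) ^ n - t * x ^ n) / (t * (1 - t))"

definition theta_kernel :: "nat \<Rightarrow> real \<Rightarrow> real \<Rightarrow> real" where
  "theta_kernel j x t = ((1 - t + t * x) ^ j - x ^ j) / (1 - t)"

definition gamma_inner :: "nat \<Rightarrow> real \<Rightarrow> real \<Rightarrow> real" where
  "gamma_inner n s x = integral {s..1} (gamma_kernel n x) - x ^ n"

definition theta_residual :: "nat \<Rightarrow> real \<Rightarrow> real \<Rightarrow> real" where
  "theta_residual j s x = integral {s..1} (theta_kernel j x) - x ^ j"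

lemma Gamma_eq_integral_gamma_inner:
  "Gamma n \<theta> = integral {0..1} (\<lambda>s. gamma_inner n s (\<theta> s))"
  unfolding Gamma_def gamma_inner_def gamma_kernel_def ..

lemma power_diff_quot_eq:
  "(1 - t) * (1 - x) * power_diff_quot n x t = (1 - t + t * x) ^ n - x ^ n"
proof -
  have "(1 - t + t * x) ^ n - x ^ n = ((1 - t + t * x) - x) * power_diff_quot n x t"
    unfolding power_diff_quot_def by (rule power_diff_sumr2)
  also have "(1 - t + t * x) - x = (1 - t) * (1 - x)"
    by (simp add: algebra_simps)
  finally show ?thesis
    by simp
qed

lemma power_diff_quot_at_1: "power_diff_quot j x 1 = real j * x ^ (j - 1)"
proof -
  have "power_diff_quot j x 1 = (\<Sum>i<j. x ^ (j - 1))"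
    unfolding power_diff_quot_def by (intro sum.cong refl) (simp add: power_add [symmetric])
  then show ?thesis
    by simp
qed

lemma continuous_on_power_diff_quot [continuous_intros]:
  "continuous_on S f \<Longrightarrow> continuous_on S g \<Longrightarrow> continuous_on S (\<lambda>z. power_diff_quot j (f z) (g z))"
  unfolding power_diff_quot_def by (intro continuous_intros)

lemma power_diff_quot_bounds:
  assumes "0 \<le> x" "x \<le> 1" "0 \<le> t" "t \<le> 1"
  shows "0 \<le> power_diff_quot j x t" "power_diff_quot j x t \<le> j"
proof -
  have "t * x \<le> t"
    using assms mult_left_le[of x t] by simp
  then have a: "0 \<le> 1 - t + t * x" "1 - t + t * x \<le> 1"
    using assms by auto
  show "0 \<le> power_diff_quot j x t"
    unfolding power_diff_quot_def using assms a by (intro sum_nonneg) auto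
  have "power_diff_quot j x t \<le> (\<Sum>i<j. 1)"
    unfolding power_diff_quot_def using assms a by (intro sum_mono mult_le_one power_le_one) auto
  then show "power_diff_quot j x t \<le> j"
    by simp
qed

lemma theta_kernel_eq: "t \<noteq> 1 \<Longrightarrow> theta_kernel j x t = (1 - x) * power_diff_quot j x t"
  unfolding theta_kernel_def using power_diff_quot_eq[of t x j] by (simp add: field_simps)

lemma gamma_kernel_eq:
  assumes "t \<noteq> 0" "t \<noteq> 1"
  shows "gamma_kernel n x t = ((1 - x) * power_diff_quot n x t + x ^ n) / t"
proof -
  have "(1 - t + t * x) ^ n - t * x ^ n = (1 - t) * ((1 - x) * power_diff_quot n x t + x ^ n)"
    using power_diff_quot_eq[of t x n] by (simp add: algebra_simps)
  then show ?thesis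
    unfolding gamma_kernel_def using assms by simp
qed

lemma theta_kernel_integrable: "theta_kernel j x integrable_on {a..b}"
  by (rule integrable_spike_finite[of "{1}" _ _ "\<lambda>t. (1 - x) * power_diff_quot j x t"])
    (auto simp: theta_kernel_eq intro!: integrable_continuous_interval continuous_intros)

lemma integral_theta_kernel:
  "integral {a..b} (theta_kernel j x) = integral {a..b} (\<lambda>t. (1 - x) * power_diff_quot j x t)"
  by (rule integral_spike[of "{1}"]) (auto simp: theta_kernel_eq)

lemma gamma_kernel_integrable: "0 < a \<Longrightarrow> gamma_kernel n x integrable_on {a..b}"
  by (rule integrable_spike_finite
      [of "{1}" _ _ "\<lambda>t. ((1 - x) * power_diff_quot n x t + x ^ n) / t"])
    (auto simp: gamma_kernel_eq intro!: integrable_continuous_interval continuous_intros)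

lemma integral_gamma_kernel:
  "0 < a \<Longrightarrow> integral {a..b} (gamma_kernel n x)
    = integral {a..b} (\<lambda>t. ((1 - x) * power_diff_quot n x t + x ^ n) / t)"
  by (rule integral_spike[of "{1}"]) (auto simp: gamma_kernel_eq)

lemma gamma_kernel_nonneg:
  assumes "0 \<le> x" "x \<le> 1" "0 \<le> t" "t \<le> 1"
  shows "0 \<le> gamma_kernel n x t"
proof -
  have "0 \<le> (1 - t) * (1 - x)"
    using assms by simp
  then have "x \<le> 1 - t + t * x"
    by (simp add: algebra_simps)
  then have "t * x ^ n \<le> (1 - t + t * x) ^ n"
    using assms by (meson mult_left_le_one_le order_trans power_mono zero_le_power)
  then show ?thesis
    unfolding gamma_kernel_def using assms by (intro divide_nonneg_nonneg) auto
qed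

lemma gamma_inner_diff_Suc:
  assumes "0 < s"
  shows "gamma_inner n s x - gamma_inner (Suc n) s x = (1 - x) * theta_residual n s x"
proof -
  have kernel_diff: "gamma_kernel n x t - gamma_kernel (Suc n) x t = (1 - x) * theta_kernel n x t"
    if "t \<noteq> 0" for t
  proof -
    have "((1 - t + t * x) ^ n - t * x ^ n) - ((1 - t + t * x) ^ Suc n - t * x ^ Suc n)
        = t * (1 - x) * ((1 - t + t * x) ^ n - x ^ n)"
      by (simp add: algebra_simps)
    then show ?thesis
      unfolding gamma_kernel_def theta_kernel_def using that
      by (simp add: diff_divide_distrib [symmetric])
  qed
  have "integral {s..1} (gamma_kernel n x) - integral {s..1} (gamma_kernel (Suc n) x)
      = integral {s..1} (\<lambda>t. gamma_kernel n x t - gamma_kernel (Suc n) x t)"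
    using assms by (simp add: integral_diff gamma_kernel_integrable)
  also have "\<dots> = integral {s..1} (\<lambda>t. (1 - x) * theta_kernel n x t)"
    using assms by (intro integral_cong) (simp add: kernel_diff)
  also have "\<dots> = (1 - x) * integral {s..1} (theta_kernel n x)"
    by simp
  finally show ?thesis
    unfolding gamma_inner_def theta_residual_def by (simp add: algebra_simps)
qed

section \<open>The equation defining \<open>theta_star\<close>\<close>

lemma theta_residual_at_1: "theta_residual j s 1 = - 1"
  unfolding theta_residual_def theta_kernel_def by simp

lemma theta_residual_at_0:
  assumes "1 \<le> j" "s \<le> 1"
  shows "theta_residual j s 0 = (1 - s) ^ j / j"
proof -
  have "power_diff_quot j 0 t = (1 - t) ^ (j - 1)" for t
  proof -
    have "power_diff_quot j 0 t = (\<Sum>i<j. if i = j - 1 then (1 - t) ^ i else 0)"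
      unfolding power_diff_quot_def by (intro sum.cong) (auto simp: power_0_left)
    then show ?thesis
      using assms by simp
  qed
  moreover have "((\<lambda>t. (1 - t) ^ j * (- 1 / real j)) has_real_derivative (1 - t) ^ (j - 1)) (at t)"
    for t
    using assms by (auto intro!: derivative_eq_intros)
  then have "((\<lambda>t. (1 - t) ^ (j - 1)) has_integral
      ((1 - 1) ^ j * (- 1 / real j) - (1 - s) ^ j * (- 1 / real j))) {s..1}"
    using assms by (intro fundamental_theorem_of_calculus)
      (auto simp: has_real_derivative_iff_has_vector_derivative [symmetric]
        intro: has_field_derivative_at_within)
  ultimately show ?thesis
    using assms by (simp add: theta_residual_def integral_theta_kernel integral_unique power_0_left)
qed

lemma continuous_on_theta_residual: "continuous_on S (theta_residual j s)"
proof -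
  have "continuous_on (UNIV \<times> cbox s 1) (\<lambda>(x, t). (1 - x) * power_diff_quot j x t)"
    unfolding case_prod_beta by (intro continuous_intros)
  from integral_continuous_on_param [OF this]
  have "continuous_on UNIV (\<lambda>x. integral {s..1} (\<lambda>t. (1 - x) * power_diff_quot j x t) - x ^ j)"
    by (intro continuous_intros) simp
  then show ?thesis
    unfolding theta_residual_def integral_theta_kernel by (rule continuous_on_subset) simp
qed

text \<open>Dividing by \<open>x^j\<close> turns the kernel into \<open>(u^j - 1) / (1 - t)\<close> with \<open>u = (1 - t) / x + t\<close>,
  a decreasing function of \<open>x\<close>.\<close>
lemma theta_kernel_div_power_le:
  assumes "1 \<le> j" "0 < x" "x \<le> y" "y \<le> 1" "t < 1"
  shows "theta_kernel j y t / y ^ j + (1 / x - 1 / y) \<le> theta_kernel j x t / x ^ j"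
proof -
  define u where "u = (1 - t) / x + t"
  define v where "v = (1 - t) / y + t"
  have "0 < y" "0 < 1 - t"
    using assms by auto
  have kernel_x: "theta_kernel j x t / x ^ j = (u ^ j - 1) / (1 - t)"
    unfolding theta_kernel_def u_def using assms by (simp add: field_simps)
  have kernel_y: "theta_kernel j y t / y ^ j = (v ^ j - 1) / (1 - t)"
    unfolding theta_kernel_def v_def using \<open>0 < y\<close> by (simp add: field_simps)
  have "(1 - t) / y \<le> (1 - t) / x"
    using assms \<open>0 < 1 - t\<close> by (intro divide_left_mono) auto
  moreover have "1 - t \<le> (1 - t) / y"
    using assms \<open>0 < y\<close> \<open>0 < 1 - t\<close> mult_left_le[of y "1 - t"] by (simp add: le_divide_eq)
  ultimately have "1 \<le> v" "v \<le> u"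
    unfolding u_def v_def by auto
  then have "(u - v) / (1 - t) \<le> (u ^ j - v ^ j) / (1 - t)"
    using diff_le_power_diff[of v u j] assms \<open>0 < 1 - t\<close> by (simp add: divide_right_mono)
  moreover have "(u - v) / (1 - t) = 1 / x - 1 / y"
    unfolding u_def v_def using assms \<open>0 < y\<close> by (simp add: field_simps)
  ultimately show ?thesis
    unfolding kernel_x kernel_y by (simp add: diff_divide_distrib)
qed

lemma theta_residual_div_power_less:
  assumes "1 \<le> j" "s < 1" "0 < x" "x < y" "y \<le> 1"
  shows "theta_residual j s y / y ^ j < theta_residual j s x / x ^ j"
proof -
  have residual_div:
    "theta_residual j s z / z ^ j = integral {s..1} (\<lambda>t. theta_kernel j z t / z ^ j) - 1"
    if "0 < z" for z
    unfolding theta_residual_def using that by (simp add: diff_divide_distrib)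
  have "integral {s..1} (\<lambda>t. theta_kernel j y t / y ^ j + (1 / x - 1 / y))
      \<le> integral {s..1} (\<lambda>t. theta_kernel j x t / x ^ j)"
    using assms theta_kernel_div_power_le[of j x y]
    by (intro integral_le_Ioo integrable_add integrable_on_divide theta_kernel_integrable) auto
  moreover have "integral {s..1} (\<lambda>t. theta_kernel j y t / y ^ j + (1 / x - 1 / y))
      = integral {s..1} (theta_kernel j y) / y ^ j + (1 - s) * (1 / x - 1 / y)"
    using assms by (subst integral_add) (auto intro: integrable_on_divide theta_kernel_integrable)
  moreover have "0 < (1 - s) * (1 / x - 1 / y)"
    using assms by (intro mult_pos_pos) (auto simp: field_simps)
  ultimately show ?thesis
    using assms residual_div[of x] residual_div[of y] by simp
qed

lemma theta_residual_unique_root: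
  assumes "1 \<le> j" "s < 1"
  shows "\<exists>!x. x \<in> {0<..<1} \<and> theta_residual j s x = 0"
proof -
  have "0 < theta_residual j s 0"
    using assms by (simp add: theta_residual_at_0)
  then obtain x where "0 \<le> x" "x \<le> 1" "theta_residual j s x = 0"
    using IVT2' [of "theta_residual j s" 1 0 0] theta_residual_at_1 continuous_on_theta_residual
    by force
  moreover have "x \<noteq> 0" "x \<noteq> 1"
    using \<open>0 < theta_residual j s 0\<close> theta_residual_at_1 calculation by auto
  moreover have "y = z" if "y \<in> {0<..<1}" "z \<in> {0<..<1}"
    "theta_residual j s y = 0" "theta_residual j s z = 0" for y z
    using theta_residual_div_power_less[OF assms, of y z]
      theta_residual_div_power_less[OF assms, of z y] that by (cases y z rule: linorder_cases) auto
  ultimately show ?thesis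
    by (intro ex1I[of _ x]) auto
qed

lemma theta_star_root:
  assumes "2 \<le> n" "s < 1"
  shows "theta_star n s \<in> {0<..<1}" "theta_residual (n - 1) s (theta_star n s) = 0"
proof -
  have "theta_star n s = (THE x. x \<in> {0<..<1} \<and> theta_residual (n - 1) s x = 0)"
    unfolding theta_star_def theta_residual_def theta_kernel_def using assms by simp
  with theI' [OF theta_residual_unique_root] assms
  show "theta_star n s \<in> {0<..<1}" "theta_residual (n - 1) s (theta_star n s) = 0"
    by auto
qed

lemma theta_star_bounds: "2 \<le> n \<Longrightarrow> 0 \<le> theta_star n s \<and> theta_star n s \<le> 1"
  using theta_star_root(1)[of n s] by (cases "s < 1") (auto simp: theta_star_def)

lemma theta_residual_nonneg_below_theta_star:
  assumes "2 \<le> n" "s < 1" "0 \<le> x" "x \<le> theta_star n s"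
  shows "0 \<le> theta_residual (n - 1) s x"
proof -
  consider "x = 0" | "x = theta_star n s" | "0 < x" "x < theta_star n s"
    using assms by linarith
  then show ?thesis
  proof cases
    case 1
    then show ?thesis
      using assms by (simp add: theta_residual_at_0)
  next
    case 2
    then show ?thesis
      using theta_star_root[OF assms(1,2)] by simp
  next
    case 3
    then have "0 < theta_residual (n - 1) s x / x ^ (n - 1)"
      using theta_residual_div_power_less[of "n - 1" s x "theta_star n s"]
        theta_star_root[OF assms(1,2)] assms by auto
    then show ?thesis
      using \<open>0 < x\<close> by (simp add: zero_less_divide_iff)
  qed
qed

lemma theta_residual_nonpos_above_theta_star:
  assumes "2 \<le> n" "s < 1" "theta_star n s \<le> x" "x \<le> 1"
  shows "theta_residual (n - 1) s x \<le> 0"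
proof (cases "x = theta_star n s")
  case True
  then show ?thesis
    using theta_star_root[OF assms(1,2)] by simp
next
  case False
  then have "theta_residual (n - 1) s x / x ^ (n - 1) < 0"
    using theta_residual_div_power_less[of "n - 1" s "theta_star n s" x]
      theta_star_root[OF assms(1,2)] assms by auto
  moreover have "0 < x"
    using theta_star_root[OF assms(1,2)] assms by auto
  ultimately show ?thesis
    by (simp add: divide_less_0_iff)
qed

section \<open>\<open>theta_star\<close> maximises the inner integral\<close>

lemma gamma_kernel_has_derivative:
  assumes "t \<noteq> 0" "t \<noteq> 1"
  shows "((\<lambda>x. gamma_kernel n x t) has_real_derivative real n * theta_kernel (n - 1) x t) (at x)"
proof -
  have "((\<lambda>x. ((1 - t + t * x) ^ n - t * x ^ n) / (t * (1 - t))) has_real_derivative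
      (real n * (1 - t + t * x) ^ (n - 1) * t - t * (real n * x ^ (n - 1))) / (t * (1 - t))) (at x)"
    using assms by (auto intro!: derivative_eq_intros)
  moreover have
    "(real n * (1 - t + t * x) ^ (n - 1) * t - t * (real n * x ^ (n - 1))) / (t * (1 - t))
      = real n * theta_kernel (n - 1) x t"
    unfolding theta_kernel_def using assms by (simp add: field_simps)
  ultimately show ?thesis
    unfolding gamma_kernel_def by simp
qed

lemma gamma_inner_has_derivative:
  assumes "0 < s"
  shows "(gamma_inner n s has_real_derivative real n * theta_residual (n - 1) s x) (at x)"
proof -
  \<comment> \<open>The kernel with its removable singularity at \<open>t = 1\<close> filled in: the Leibniz rule
    needs a derivative in \<open>x\<close> at every \<open>t\<close>.\<close>
  define K where "K x t = ((1 - x) * power_diff_quot n x t + x ^ n) / t" for x t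
  define K' where "K' x t = real n * ((1 - x) * power_diff_quot (n - 1) x t)" for x t
  have K_deriv: "((\<lambda>x. K x t) has_real_derivative K' x t) (at x)" if "t \<in> cbox s 1" for x t
  proof (cases "t = 1")
    case True
    show ?thesis
      unfolding K_def K'_def True power_diff_quot_at_1
      by (auto intro!: derivative_eq_intros simp: algebra_simps)
  next
    case False
    then have "t \<noteq> 0" "t \<noteq> 1"
      using that assms by auto
    then have "(\<lambda>x. K x t) = (\<lambda>x. gamma_kernel n x t)" "K' x t = real n * theta_kernel (n - 1) x t"
      unfolding K_def K'_def by (simp_all add: gamma_kernel_eq theta_kernel_eq)
    then show ?thesis
      using gamma_kernel_has_derivative[OF \<open>t \<noteq> 0\<close> \<open>t \<noteq> 1\<close>] by simp
  qed
  have "K x integrable_on cbox s 1" for x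
    unfolding K_def using assms by (intro integrable_continuous continuous_intros) auto
  moreover have "continuous_on (UNIV \<times> cbox s 1) (\<lambda>(x, t). K' x t)"
    unfolding K'_def case_prod_beta by (intro continuous_intros)
  ultimately have
    "((\<lambda>x. integral (cbox s 1) (K x)) has_real_derivative integral (cbox s 1) (K' x)) (at x)"
    using K_deriv by (intro leibniz_rule_field_derivative [where U = UNIV, simplified]) auto
  then have "((\<lambda>x. integral {s..1} (K x) - x ^ n) has_real_derivative
      integral {s..1} (K' x) - real n * x ^ (n - 1)) (at x)"
    by (auto intro!: derivative_eq_intros)
  moreover have "gamma_inner n s = (\<lambda>x. integral {s..1} (K x) - x ^ n)"
    unfolding gamma_inner_def K_def using assms by (simp add: integral_gamma_kernel)
  moreover have "integral {s..1} (K' x) = real n * (theta_residual (n - 1) s x + x ^ (n - 1))"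
    unfolding theta_residual_def K'_def by (simp add: integral_theta_kernel)
  ultimately show ?thesis
    by (simp add: algebra_simps)
qed

lemma gamma_inner_le_at_theta_star:
  assumes "2 \<le> n" "0 < s" "s < 1" "0 \<le> x" "x \<le> 1"
  shows "gamma_inner n s x \<le> gamma_inner n s (theta_star n s)"
proof (cases "x \<le> theta_star n s")
  case True
  show ?thesis
  proof (rule DERIV_nonneg_imp_nondecreasing [where f = "gamma_inner n s", OF True])
    fix z
    assume "x \<le> z" "z \<le> theta_star n s"
    then have "0 \<le> real n * theta_residual (n - 1) s z"
      using assms theta_residual_nonneg_below_theta_star[of n s z] by simp
    then show "\<exists>D. (gamma_inner n s has_real_derivative D) (at z) \<and> 0 \<le> D"
      using gamma_inner_has_derivative[OF assms(2)] by blast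
  qed
next
  case False
  show ?thesis
  proof (rule DERIV_nonpos_imp_nonincreasing [where f = "gamma_inner n s"])
    show "theta_star n s \<le> x"
      using False by simp
    fix z
    assume "theta_star n s \<le> z" "z \<le> x"
    then have "real n * theta_residual (n - 1) s z \<le> 0"
      using assms theta_residual_nonpos_above_theta_star[of n s z] by (simp add: mult_nonneg_nonpos)
    then show "\<exists>D. (gamma_inner n s has_real_derivative D) (at z) \<and> D \<le> 0"
      using gamma_inner_has_derivative[OF assms(2)] by blast
  qed
qed

section \<open>Integrability of the truncated integrand\<close>

lemma gamma_inner_antimono:
  assumes "0 < s" "s \<le> s'" "s' \<le> 1" "0 \<le> x" "x \<le> 1"
  shows "gamma_inner n s' x \<le> gamma_inner n s x"
proof -
  have "gamma_kernel n x integrable_on {s..1}"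
    using assms by (simp add: gamma_kernel_integrable)
  then have "integral {s..1} (gamma_kernel n x)
      = integral {s..s'} (gamma_kernel n x) + integral {s'..1} (gamma_kernel n x)"
    using assms by (simp add: Henstock_Kurzweil_Integration.integral_combine)
  moreover have "0 \<le> integral {s..s'} (gamma_kernel n x)"
    using assms by (intro integral_nonneg gamma_kernel_integrable gamma_kernel_nonneg) auto
  ultimately show ?thesis
    unfolding gamma_inner_def by linarith
qed

lemma gamma_inner_theta_star_antimono:
  assumes "2 \<le> n" "0 < s" "s \<le> s'" "s' \<le> 1"
  shows "gamma_inner n s' (theta_star n s') \<le> gamma_inner n s (theta_star n s)"
proof (cases "s = 1")
  case False
  have "gamma_inner n s' (theta_star n s') \<le> gamma_inner n s (theta_star n s')"
    using assms theta_star_bounds[of n s'] by (intro gamma_inner_antimono) auto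
  also have "\<dots> \<le> gamma_inner n s (theta_star n s)"
    using assms False theta_star_bounds[of n s'] by (intro gamma_inner_le_at_theta_star) auto
  finally show ?thesis .
qed (use assms in simp)

lemma gamma_inner_ge:
  assumes "0 < s" "0 \<le> x" "x \<le> 1"
  shows "- 1 \<le> gamma_inner n s x"
proof -
  have "0 \<le> integral {s..1} (gamma_kernel n x)"
    using assms by (intro integral_nonneg gamma_kernel_integrable gamma_kernel_nonneg) auto
  moreover have "x ^ n \<le> 1"
    using assms by (simp add: power_le_one)
  ultimately show ?thesis
    unfolding gamma_inner_def by linarith
qed

lemma gamma_inner_le_neg_ln:
  assumes "0 < s" "s \<le> 1" "0 \<le> x" "x \<le> 1"
  shows "gamma_inner n s x \<le> real (Suc n) * - ln s"
proof -
  define K where "K t = ((1 - x) * power_diff_quot n x t + x ^ n) / t" for t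
  have "K t \<le> real (Suc n) * (1 / t)" if "t \<in> {s..1}" for t
  proof -
    have "(1 - x) * power_diff_quot n x t \<le> real n"
      using assms that power_diff_quot_bounds[of x t n]
        mult_left_le_one_le[of "power_diff_quot n x t" "1 - x"] by auto
    moreover have "x ^ n \<le> 1"
      using assms by (simp add: power_le_one)
    ultimately show ?thesis
      unfolding K_def using assms that by (simp add: divide_right_mono)
  qed
  moreover have "K integrable_on {s..1}"
    unfolding K_def using assms by (intro integrable_continuous_interval continuous_intros) auto
  moreover have "((\<lambda>t. real (Suc n) * (1 / t)) has_integral real (Suc n) * (ln 1 - ln s)) {s..1}"
    using assms by (intro has_integral_mult_right has_integral_inverse_Icc) auto
  ultimately have "integral {s..1} K \<le> real (Suc n) * - ln s"
    using has_integral_le[OF integrable_integral] by fastforce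
  then have "integral {s..1} (gamma_kernel n x) \<le> real (Suc n) * - ln s"
    unfolding K_def using assms by (simp add: integral_gamma_kernel)
  moreover have "0 \<le> x ^ n"
    using assms by simp
  ultimately show ?thesis
    unfolding gamma_inner_def by linarith
qed

lemma trunc_thr_theta_star_bounds:
  "2 \<le> n \<Longrightarrow> 0 \<le> trunc_thr (theta_star n) l1 l2 s \<and> trunc_thr (theta_star n) l1 l2 s \<le> 1"
  unfolding trunc_thr_def using theta_star_bounds[of n s] by auto

lemma gamma_inner_trunc_theta_star_integrable_on_Icc:
  assumes "2 \<le> n" "0 < a" "a \<le> 1"
  shows "(\<lambda>s. gamma_inner n s (trunc_thr (theta_star n) l1 l2 s)) integrable_on {a..1}"
    (is "?g integrable_on _")
proof -
  define c1 where "c1 = min 1 (max a l1)"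
  define c2 where "c2 = min 1 (max c1 l2)"
  have c: "a \<le> c1" "c1 \<le> c2" "c2 \<le> 1"
    using assms by (auto simp: c1_def c2_def)
  have "antimono_on {a..c1} (\<lambda>s. gamma_inner n s 1)"
    using assms c by (intro monotone_onI gamma_inner_antimono) auto
  moreover have "?g s = gamma_inner n s 1" if "a < s" "s < c1" for s
    using that by (auto simp: trunc_thr_def c1_def)
  ultimately have left: "?g integrable_on {a..c1}"
    by (rule integrable_on_Icc_antimono_on_Ioo)
  have "antimono_on {c1..c2} (\<lambda>s. gamma_inner n s (theta_star n s))"
    using assms c by (intro monotone_onI gamma_inner_theta_star_antimono) auto
  moreover have "?g s = gamma_inner n s (theta_star n s)" if "c1 < s" "s < c2" for s
    using that by (auto simp: trunc_thr_def c1_def c2_def)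
  ultimately have middle: "?g integrable_on {c1..c2}"
    by (rule integrable_on_Icc_antimono_on_Ioo)
  have "antimono_on {c2..1} (\<lambda>s. gamma_inner n s 0)"
    using assms c by (intro monotone_onI gamma_inner_antimono) auto
  moreover have "?g s = gamma_inner n s 0" if "c2 < s" "s < 1" for s
    using that by (auto simp: trunc_thr_def c1_def c2_def)
  ultimately have right: "?g integrable_on {c2..1}"
    by (rule integrable_on_Icc_antimono_on_Ioo)
  have "?g integrable_on {c1..1}"
    by (rule Henstock_Kurzweil_Integration.integrable_combine[OF c(2,3) middle right])
  moreover have "c1 \<le> 1"
    using c by simp
  ultimately show ?thesis
    using Henstock_Kurzweil_Integration.integrable_combine[OF c(1) _ left] by blast
qed

lemma gamma_inner_trunc_theta_star_integrable:
  assumes "2 \<le> n"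
  shows "(\<lambda>s. gamma_inner n s (trunc_thr (theta_star n) l1 l2 s)) integrable_on {0..1}"
    (is "?g integrable_on _")
proof -
  have "(\<lambda>s. ?g s + 1) integrable_on {0..1}"
  proof (rule integrable_on_Icc_if_nonneg_bounded_tails)
    fix s :: real
    assume "0 < s" "s \<le> 1"
    then have "- 1 \<le> ?g s"
      using assms trunc_thr_theta_star_bounds[of n l1 l2 s] by (intro gamma_inner_ge) auto
    then show "0 \<le> ?g s + 1"
      by simp
  next
    fix a :: real
    assume a: "0 < a" "a \<le> 1"
    then show integrable: "(\<lambda>s. ?g s + 1) integrable_on {a..1}"
      using assms by (intro integrable_add gamma_inner_trunc_theta_star_integrable_on_Icc) auto
    have "((\<lambda>s. 1) has_integral 1 - a) {a..1}"
      using has_integral_const_real[of "1::real" a 1] a by simp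
    then have "((\<lambda>s. real (Suc n) * - ln s + 1) has_integral
        real (Suc n) * ((1 - 1 * ln 1) - (a - a * ln a)) + (1 - a)) {a..1}"
      using a by (intro has_integral_add has_integral_mult_right has_integral_neg_ln)
    moreover have "?g s + 1 \<le> real (Suc n) * - ln s + 1" if "s \<in> {a..1}" for s
      using assms a that trunc_thr_theta_star_bounds[of n l1 l2 s]
        gamma_inner_le_neg_ln[of s "trunc_thr (theta_star n) l1 l2 s" n] by auto
    ultimately have "integral {a..1} (\<lambda>s. ?g s + 1)
        \<le> real (Suc n) * ((1 - 1 * ln 1) - (a - a * ln a)) + (1 - a)"
      using has_integral_le[OF integrable_integral[OF integrable]] by blast
    also have "\<dots> \<le> real (Suc n) * 1 + 1"
    proof -
      have "a * ln a \<le> 0"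
        using a by (simp add: mult_nonneg_nonpos)
      then have "(1 - 1 * ln 1) - (a - a * ln a) \<le> 1"
        using a by (simp only: ln_one)
      then show ?thesis
        using a by (intro add_mono mult_left_mono) auto
    qed
    finally show "integral {a..1} (\<lambda>s. ?g s + 1) \<le> real (Suc n) * 1 + 1" .
  qed
  then show ?thesis
    using integrable_diff[OF _ integrable_const_ivl, of "\<lambda>s. ?g s + 1" 0 1 1] by simp
qed

section \<open>Monotonicity in \<open>n\<close>\<close>

lemma gamma_inner_trunc_theta_star_Suc_le:
  assumes "2 \<le> k" "0 < s" "s < 1"
  shows "gamma_inner (Suc k) s (trunc_thr (theta_star (Suc k)) l1 l2 s)
    \<le> gamma_inner k s (trunc_thr (theta_star k) l1 l2 s)"
proof -
  consider "s \<le> l1" | "\<not> s \<le> l1" "s < l2" | "\<not> s \<le> l1" "\<not> s < l2"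
    by blast
  then show ?thesis
  proof cases
    case 1
    then show ?thesis
      using gamma_inner_diff_Suc[OF assms(2), of k 1] by (simp add: trunc_thr_def)
  next
    case 2
    define x where "x = theta_star (Suc k) s"
    have "x \<in> {0<..<1}" "theta_residual k s x = 0"
      using theta_star_root[of "Suc k" s] assms unfolding x_def by auto
    then have "gamma_inner (Suc k) s x = gamma_inner k s x"
      using gamma_inner_diff_Suc[OF assms(2), of k x] by simp
    also have "\<dots> \<le> gamma_inner k s (theta_star k s)"
      using assms \<open>x \<in> {0<..<1}\<close> by (intro gamma_inner_le_at_theta_star) auto
    finally show ?thesis
      using 2 by (simp add: trunc_thr_def x_def)
  next
    case 3
    have "0 \<le> theta_residual k s 0"
      using assms by (simp add: theta_residual_at_0)
    then show ?thesis
      using 3 gamma_inner_diff_Suc[OF assms(2), of k 0] by (simp add: trunc_thr_def)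
  qed
qed

lemma Gamma_trunc_theta_star_Suc_le:
  assumes "2 \<le> k"
  shows "Gamma (Suc k) (trunc_thr (theta_star (Suc k)) l1 l2)
    \<le> Gamma k (trunc_thr (theta_star k) l1 l2)"
  unfolding Gamma_eq_integral_gamma_inner using assms
  by (intro integral_le_Ioo gamma_inner_trunc_theta_star_integrable
      gamma_inner_trunc_theta_star_Suc_le) auto

theorem mainTheorem15:
  fixes l1 l2 :: real and m n :: nat
  assumes "0 \<le> l1" "l1 \<le> l2" "l2 \<le> 1"
    and "2 \<le> m" "m \<le> n"
  shows "Gamma n (trunc_thr (theta_star n) l1 l2) \<le> Gamma m (trunc_thr (theta_star m) l1 l2)"
  using \<open>m \<le> n\<close>
proof (induction n rule: dec_induct)
  case (step k)
  then show ?case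
    using Gamma_trunc_theta_star_Suc_le[of k l1 l2] \<open>2 \<le> m\<close> by simp
qed simp

end
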